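(* Let $f:U\to\mathbb{R}^3$ be a Guichard net and $\hat f$ an associated system of $f$ given by $d\hat f=\sum_{m=1}^3h_m\partial_mf\,dx_m$. Then, for each $i\in\{1,2,3\}$, the coordinate surfaces $x_i=\mathrm{const}$ of $f$ are totally umbilic if and only if $\partial_ih_i=0$.
   Context: $U\subset\mathbb{R}^3$ open connected, coordinates $(x_1,x_2,x_3)=(x,y,z)$, $\partial_i=\partial_{x_i}$. A triply orthogonal system is $f:U\to\mathbb{R}^3$ with $\det(\partial_1f,\partial_2f,\partial_3f)\ne0$ and $(\partial_if,\partial_jf)=0$ for $i\ne j$. For $(i,j,k)$ cyclic, $N_i=\partial_jf\times\partial_kf/|\cdot|$, Lamé coefficients $H_i$ by $\partial_if=H_iN_i$, rotational coefficients $\beta_{ij}=\frac1{H_i}\partial_iH_j$, and $\kappa_{ij}=-\beta_{ij}/H_j$ (principal curvature of $x_i=\mathrm{const}$ along $x_j$-lines); the surfaces $x_i=\mathrm{const}$ are totally umbilic if $\kappa_{ij}=\kappa_{ik}$. A Guichard net satisfies $H_1^2+H_2^2-H_3^2=0$. Its associated systems are $\hat f$ with $d\hat f=\sum h_m\partial_mf\,dx_m$, where $(h_1,h_2,h_3)$ solves $\partial_xh_3=-\frac{H_2}{H_3}\kappa_{13}$, $\partial_yh_3=\frac{H_1}{H_3}\kappa_{23}$, $\partial_zh_3=-\frac{H_1H_2}{H_3^2}(\kappa_{31}-\kappa_{32})$, $h_1=h_3+\frac{H_2}{H_1H_3}$, $h_2=h_3-\frac{H_1}{H_2H_3}$. 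*)

theory Defs
  imports "HOL-Analysis.Analysis"
begin

unbundle no cross3_syntax

text \<open>Coordinates x_1,x_2,x_3 of R^3 are indexed by the type 3 (numerals 1,2,3 :: 3,
  where 3 = 0 in the ring 3); the cyclic successor of i is i+1 (mod 3).\<close>

definition partial :: "3 \<Rightarrow> (real^3 \<Rightarrow> 'b::real_normed_vector) \<Rightarrow> real^3 \<Rightarrow> 'b" where
  "partial i g p = frechet_derivative g (at p) (axis i 1)"

fun Ck_on :: "nat \<Rightarrow> (real^3) set \<Rightarrow> (real^3 \<Rightarrow> 'b::real_normed_vector) \<Rightarrow> bool" where
  "Ck_on 0 U g = continuous_on U g"
| "Ck_on (Suc k) U g = (g differentiable_on U \<and> (\<forall>i. Ck_on k U (partial i g)))"

definition smooth3_on :: "(real^3) set \<Rightarrow> (real^3 \<Rightarrow> 'b::real_normed_vector) \<Rightarrow> bool" where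
  "smooth3_on U g = (\<forall>k. Ck_on k U g)"

definition triply_orthogonal :: "(real^3) set \<Rightarrow> (real^3 \<Rightarrow> real^3) \<Rightarrow> bool" where
  "triply_orthogonal U f =
     (\<forall>p\<in>U. det (\<chi> r c. partial c f p $ r) \<noteq> 0 \<and>
            (\<forall>i j. i \<noteq> j \<longrightarrow> partial i f p \<bullet> partial j f p = 0))"

definition unit_normal :: "(real^3 \<Rightarrow> real^3) \<Rightarrow> 3 \<Rightarrow> real^3 \<Rightarrow> real^3" where
  "unit_normal f i p =
     (let c = cross3 (partial (i+1) f p) (partial (i+2) f p) in (1 / norm c) *\<^sub>R c)"

text \<open>Lame coefficient H_i, defined by d_i f = H_i N_i.\<close>
definition lame :: "(real^3 \<Rightarrow> real^3) \<Rightarrow> 3 \<Rightarrow> real^3 \<Rightarrow> real" where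
  "lame f i p = partial i f p \<bullet> unit_normal f i p"

definition rot_coeff :: "(real^3 \<Rightarrow> real^3) \<Rightarrow> 3 \<Rightarrow> 3 \<Rightarrow> real^3 \<Rightarrow> real" where
  "rot_coeff f i j p = partial i (lame f j) p / lame f i p"

definition kappa :: "(real^3 \<Rightarrow> real^3) \<Rightarrow> 3 \<Rightarrow> 3 \<Rightarrow> real^3 \<Rightarrow> real" where
  "kappa f i j p = - rot_coeff f i j p / lame f j p"

definition guichard_net :: "(real^3) set \<Rightarrow> (real^3 \<Rightarrow> real^3) \<Rightarrow> bool" where
  "guichard_net U f =
     (triply_orthogonal U f \<and>
      (\<forall>p\<in>U. (lame f 1 p)\<^sup>2 + (lame f 2 p)\<^sup>2 - (lame f 3 p)\<^sup>2 = 0))"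

definition totally_umbilic_coord :: "(real^3) set \<Rightarrow> (real^3 \<Rightarrow> real^3) \<Rightarrow> 3 \<Rightarrow> bool" where
  "totally_umbilic_coord U f i = (\<forall>p\<in>U. kappa f i (i+1) p = kappa f i (i+2) p)"

definition assoc_coeffs :: "(real^3) set \<Rightarrow> (real^3 \<Rightarrow> real^3) \<Rightarrow> (3 \<Rightarrow> real^3 \<Rightarrow> real) \<Rightarrow> bool" where
  "assoc_coeffs U f h =
     ((\<forall>m. h m differentiable_on U) \<and>
      (\<forall>p\<in>U.
        partial 1 (h 3) p = - (lame f 2 p / lame f 3 p) * kappa f 1 3 p \<and>
        partial 2 (h 3) p = (lame f 1 p / lame f 3 p) * kappa f 2 3 p \<and>
        partial 3 (h 3) p = - (lame f 1 p * lame f 2 p / (lame f 3 p)\<^sup>2)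
                               * (kappa f 3 1 p - kappa f 3 2 p) \<and>
        h 1 p = h 3 p + lame f 2 p / (lame f 1 p * lame f 3 p) \<and>
        h 2 p = h 3 p - lame f 1 p / (lame f 2 p * lame f 3 p)))"

definition associated_system :: "(real^3) set \<Rightarrow> (real^3 \<Rightarrow> real^3) \<Rightarrow> (real^3 \<Rightarrow> real^3)
     \<Rightarrow> (3 \<Rightarrow> real^3 \<Rightarrow> real) \<Rightarrow> bool" where
  "associated_system U f fhat h =
     (assoc_coeffs U f h \<and> fhat differentiable_on U \<and>
      (\<forall>p\<in>U. \<forall>m. partial m fhat p = h m p *\<^sub>R partial m f p))"

end

theory Submission
  imports Defs
begin

text \<open>Differentiating \<open>h\<^sub>i = h\<^sub>3 \<plusminus> H\<^sub>j/(H\<^sub>iH\<^sub>3)\<close> (\<open>{i,j} = {1,2}\<close>) in \<open>x\<^sub>i\<close>,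
  substituting \<open>\<partial>\<^sub>ih\<^sub>3\<close> from the defining system and eliminating \<open>\<partial>\<^sub>iH\<^sub>i\<close> with the
  derivative \<open>H\<^sub>1\<partial>H\<^sub>1 + H\<^sub>2\<partial>H\<^sub>2 = H\<^sub>3\<partial>H\<^sub>3\<close> of the Guichard relation gives
  \<open>\<partial>\<^sub>ih\<^sub>i = \<mp>(H\<^sub>jH\<^sub>3/H\<^sub>i\<^sup>2)(\<kappa>\<^sub>ij - \<kappa>\<^sub>i3)\<close>, just as \<open>\<partial>\<^sub>3h\<^sub>3\<close> is by definition a multiple of
  \<open>\<kappa>\<^sub>31 - \<kappa>\<^sub>32\<close>. Triple orthogonality makes all Lame coefficients nonzero, so in each case
  \<open>\<partial>\<^sub>ih\<^sub>i\<close> vanishes exactly where the two principal curvatures agree.\<close>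

lemma partial_has_derivative:
  "(g has_derivative g') (at p) \<Longrightarrow> partial i g p = g' (axis i 1)"
  unfolding partial_def using frechet_derivative_at by metis

lemma has_derivative_cross3:
  assumes "(g has_derivative g') (at p)" "(k has_derivative k') (at p)"
  shows "((\<lambda>x. cross3 (g x) (k x)) has_derivative
           (\<lambda>v. cross3 (g p) (k' v) + cross3 (g' v) (k p))) (at p)"
  using bilinear_cross bilinear_conv_bounded_bilinear bounded_bilinear.FDERIV assms by blast

lemma differentiable_cross3:
  "g differentiable at p \<Longrightarrow> k differentiable at p \<Longrightarrow>
     (\<lambda>x. cross3 (g x) (k x)) differentiable at p"
  unfolding differentiable_def using has_derivative_cross3 by blast

lemma cyclic_successors_3:
  "(1::3) + 1 = 2" "(1::3) + 2 = 3" "(2::3) + 1 = 3" "(2::3) + 2 = 1" "(3::3) + 1 = 1" "(3::3) + 2 = 2"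
  by simp_all

lemma inner_cross3_cyclic_eq_det:
  fixes v :: "3 \<Rightarrow> real^3"
  shows "v j \<bullet> cross3 (v (j+1)) (v (j+2)) = det (\<chi> r c. v c $ r)"
proof -
  show ?thesis
    using exhaust_3[of j] by (auto simp only: cyclic_successors_3) (auto simp: cross3_simps)
qed

lemma
  assumes "det (\<chi> r c. partial c f p $ r) \<noteq> 0"
  shows cross3_partial_nonzero: "cross3 (partial (j+1) f p) (partial (j+2) f p) \<noteq> 0"
    and lame_nonzero: "lame f j p \<noteq> 0"
proof -
  have triple: "partial j f p \<bullet> cross3 (partial (j+1) f p) (partial (j+2) f p) \<noteq> 0"
    using assms by (simp add: inner_cross3_cyclic_eq_det[of "\<lambda>c. partial c f p"])
  then show "cross3 (partial (j+1) f p) (partial (j+2) f p) \<noteq> 0" by auto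
  with triple show "lame f j p \<noteq> 0"
    by (simp add: lame_def unit_normal_def Let_def inner_scaleR_right)
qed

lemma lame_differentiable_at:
  assumes "\<And>j. partial j f differentiable at p"
    and "cross3 (partial (j+1) f p) (partial (j+2) f p) \<noteq> 0"
  shows "lame f j differentiable at p"
proof -
  have c: "(\<lambda>x. cross3 (partial (j+1) f x) (partial (j+2) f x)) differentiable at p"
    using differentiable_cross3 assms(1) by blast
  have "(\<lambda>x. norm (cross3 (partial (j+1) f x) (partial (j+2) f x))) differentiable at p"
    using differentiable_chain_at[OF c differentiable_norm_at[OF assms(2)]] by (simp add: o_def)
  then have "unit_normal f j differentiable at p"
    unfolding unit_normal_def Let_def
    by (intro differentiable_scaleR differentiable_divide c) (use assms(2) in auto)
  then show ?thesis
    unfolding lame_def[abs_def] by (intro differentiable_inner assms(1))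
qed

lemma triply_orthogonal_lame_at:
  assumes "open U" "smooth3_on U f" "triply_orthogonal U f" "p \<in> U"
  shows "lame f j p \<noteq> 0" and "lame f j differentiable at p"
proof -
  have det: "det (\<chi> r c. partial c f p $ r) \<noteq> 0"
    using assms(3,4) unfolding triply_orthogonal_def by blast
  then show "lame f j p \<noteq> 0" by (rule lame_nonzero)
  have "Ck_on 2 U f" using assms(2) unfolding smooth3_on_def by blast
  then have "partial k f differentiable at p" for k
    using assms(1,4) by (simp add: numeral_2_eq_2 differentiable_on_eq_differentiable_at)
  then show "lame f j differentiable at p"
    using lame_differentiable_at cross3_partial_nonzero[OF det] by blast
qed

lemma partial_sum_quotient:
  fixes A B C g k :: "real^3 \<Rightarrow> real"
  assumes "open U" "p \<in> U"
    and "A differentiable at p" "B differentiable at p" "C differentiable at p"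
      "g differentiable at p"
    and "A p \<noteq> 0" "C p \<noteq> 0"
    and "\<And>x. x \<in> U \<Longrightarrow> k x = g x + c * B x / (A x * C x)"
  shows "partial i k p = partial i g p + c * (partial i B p / (A p * C p)
           - B p * (partial i A p * C p + A p * partial i C p) / (A p * C p)\<^sup>2)"
proof -
  obtain A' B' C' g' where A': "(A has_derivative A') (at p)" and B': "(B has_derivative B') (at p)"
    and C': "(C has_derivative C') (at p)" and g': "(g has_derivative g') (at p)"
    using assms(3-6) unfolding differentiable_def by blast
  have "((\<lambda>x. g x + c * B x / (A x * C x)) has_derivative (\<lambda>v. g' v +
      ((c * B' v) * (A p * C p) - (c * B p) * (A p * C' v + A' v * C p)) / ((A p * C p) * (A p * C p))))
      (at p)"
    using assms(7,8)
    by (intro has_derivative_add g' has_derivative_divide' has_derivative_mult_right B'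
        has_derivative_mult A' C') simp
  then have "(k has_derivative (\<lambda>v. g' v +
      ((c * B' v) * (A p * C p) - (c * B p) * (A p * C' v + A' v * C p)) / ((A p * C p) * (A p * C p))))
      (at p)"
    by (rule has_derivative_transform_within_open[OF _ assms(1,2)]) (use assms(9) in auto)
  from partial_has_derivative[OF this] show ?thesis
    unfolding partial_has_derivative[OF A'] partial_has_derivative[OF B']
      partial_has_derivative[OF C'] partial_has_derivative[OF g']
    using assms(7,8) by (simp add: field_simps power2_eq_square)
qed

lemma partial_sum_squares_eq:
  fixes A B C :: "real^3 \<Rightarrow> real"
  assumes "open U" "p \<in> U"
    and "A differentiable at p" "B differentiable at p" "C differentiable at p"
    and "\<And>x. x \<in> U \<Longrightarrow> (A x)\<^sup>2 + (B x)\<^sup>2 = (C x)\<^sup>2"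
  shows "A p * partial i A p + B p * partial i B p = C p * partial i C p"
proof -
  obtain A' B' C' where A': "(A has_derivative A') (at p)" and B': "(B has_derivative B') (at p)"
    and C': "(C has_derivative C') (at p)"
    using assms(3-5) unfolding differentiable_def by blast
  have "((\<lambda>x. A x * A x + B x * B x - C x * C x) has_derivative
      (\<lambda>v. (A p * A' v + A' v * A p) + (B p * B' v + B' v * B p) - (C p * C' v + C' v * C p))) (at p)"
    by (intro has_derivative_diff has_derivative_add has_derivative_mult A' B' C')
  moreover have "((\<lambda>x. A x * A x + B x * B x - C x * C x) has_derivative (\<lambda>v. 0)) (at p)"
    by (rule has_derivative_transform_within_open[OF has_derivative_const assms(1,2)])
       (use assms(6) in \<open>auto simp: power2_eq_square\<close>)
  ultimately have "(\<lambda>v. (A p * A' v + A' v * A p) + (B p * B' v + B' v * B p)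
      - (C p * C' v + C' v * C p)) = (\<lambda>v. 0)"
    by (rule has_derivative_unique)
  then have "(A p * A' (axis i 1) + A' (axis i 1) * A p) + (B p * B' (axis i 1) + B' (axis i 1) * B p)
      - (C p * C' (axis i 1) + C' (axis i 1) * C p) = 0"
    by metis
  then show ?thesis
    unfolding partial_has_derivative[OF A'] partial_has_derivative[OF B'] partial_has_derivative[OF C']
    by (simp add: algebra_simps)
qed

text \<open>Here \<open>a\<^sub>k\<close> stands for \<open>\<partial>\<^sub>iH\<^sub>k\<close> and \<open>d\<close> for \<open>\<partial>\<^sub>ih\<^sub>3\<close>,
  where \<open>i = 1\<close> is the differentiated index.\<close>

lemma guichard_partial_coeff_identity:
  fixes H1 H2 H3 a1 a2 a3 d c :: real
  assumes nz: "H1 \<noteq> 0" "H2 \<noteq> 0" "H3 \<noteq> 0"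
    and g: "H1 * a1 + H2 * a2 = H3 * a3" and gq: "H1\<^sup>2 + H2\<^sup>2 = H3\<^sup>2"
    and d: "d = - c * (H2 / H3) * (- (a3 / H1) / H3)"
  shows "d + c * (a2 / (H1 * H3) - H2 * (a1 * H3 + H1 * a3) / (H1 * H3)\<^sup>2)
    = - c * (H2 * H3 / H1\<^sup>2) * (- (a2 / H1) / H2 - - (a3 / H1) / H3)"
proof -
  have "(H1 * a2 - H2 * a1) * H1 = (H1\<^sup>2 + H2\<^sup>2) * a2 - H2 * (H1 * a1 + H2 * a2)"
    by (simp add: algebra_simps power2_eq_square)
  also have "\<dots> = H3 * (H3 * a2 - H2 * a3)"
    unfolding g gq by (simp add: algebra_simps power2_eq_square)
  finally have key: "H1 * a2 - H2 * a1 = H3 * (H3 * a2 - H2 * a3) / H1"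
    using nz by (simp add: field_simps)
  have "d + c * (a2 / (H1 * H3) - H2 * (a1 * H3 + H1 * a3) / (H1 * H3)\<^sup>2)
      = c * (H1 * a2 - H2 * a1) / (H1\<^sup>2 * H3)"
    unfolding d using nz by (simp add: field_simps power2_eq_square)
  also have "\<dots> = c * (H3 * a2 - H2 * a3) / H1 ^ 3"
    unfolding key using nz by (simp add: field_simps power2_eq_square power3_eq_cube)
  also have "\<dots> = - c * (H2 * H3 / H1\<^sup>2) * (- (a2 / H1) / H2 - - (a3 / H1) / H3)"
    using nz by (simp add: field_simps power2_eq_square power3_eq_cube)
  finally show ?thesis .
qed

lemma partial_assoc_coeff_eq:
  assumes "open U" "smooth3_on U f" "guichard_net U f" "p \<in> U"
    and "{a, b} = {1, 2}"
    and ha: "\<And>x. x \<in> U \<Longrightarrow> h a x = h 3 x + c * lame f b x / (lame f a x * lame f 3 x)"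
    and h3: "partial a (h 3) p = - c * (lame f b p / lame f 3 p) * kappa f a 3 p"
    and "h 3 differentiable at p"
  shows "partial a (h a) p
    = - c * (lame f b p * lame f 3 p / (lame f a p)\<^sup>2) * (kappa f a b p - kappa f a 3 p)"
proof -
  have tri: "triply_orthogonal U f" and
    G: "\<And>x. x \<in> U \<Longrightarrow> (lame f a x)\<^sup>2 + (lame f b x)\<^sup>2 = (lame f 3 x)\<^sup>2"
    using assms(3,5) unfolding guichard_net_def doubleton_eq_iff by auto
  note nz = triply_orthogonal_lame_at(1)[OF assms(1,2) tri assms(4)]
  note ld = triply_orthogonal_lame_at(2)[OF assms(1,2) tri assms(4)]
  have "partial a (h a) p = partial a (h 3) p + c * (partial a (lame f b) p / (lame f a p * lame f 3 p)
      - lame f b p * (partial a (lame f a) p * lame f 3 p + lame f a p * partial a (lame f 3) p)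
        / (lame f a p * lame f 3 p)\<^sup>2)"
    by (rule partial_sum_quotient[OF assms(1,4) ld ld ld assms(8) nz nz ha])
  also have "\<dots> = - c * (lame f b p * lame f 3 p / (lame f a p)\<^sup>2) * (kappa f a b p - kappa f a 3 p)"
    using guichard_partial_coeff_identity[OF nz nz nz
        partial_sum_squares_eq[OF assms(1,4) ld ld ld G] G[OF assms(4)] h3[unfolded kappa_def rot_coeff_def]]
    by (simp add: kappa_def rot_coeff_def)
  finally show ?thesis .
qed

lemma partial_assoc_coeff_self_multiple:
  assumes "open U" "smooth3_on U f" "guichard_net U f" "associated_system U f fhat h" "p \<in> U"
  obtains s where "s \<noteq> 0" "partial i (h i) p = s * (kappa f i (i+1) p - kappa f i (i+2) p)"
proof -
  have tri: "triply_orthogonal U f" using assms(3) unfolding guichard_net_def by blast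
  have nz: "lame f j p \<noteq> 0" for j
    by (rule triply_orthogonal_lame_at(1)[OF assms(1,2) tri assms(5)])
  have coeffs: "assoc_coeffs U f h" using assms(4) unfolding associated_system_def by blast
  then have h3: "h 3 differentiable at p"
    using assms(1,5) unfolding assoc_coeffs_def by (meson differentiable_on_eq_differentiable_at)
  have ac: "\<forall>x\<in>U. h 1 x = h 3 x + 1 * lame f 2 x / (lame f 1 x * lame f 3 x)
      \<and> h 2 x = h 3 x + - 1 * lame f 1 x / (lame f 2 x * lame f 3 x)"
    "partial 1 (h 3) p = - 1 * (lame f 2 p / lame f 3 p) * kappa f 1 3 p"
    "partial 2 (h 3) p = - (- 1) * (lame f 1 p / lame f 3 p) * kappa f 2 3 p"
    "partial 3 (h 3) p
      = - (lame f 1 p * lame f 2 p / (lame f 3 p)\<^sup>2) * (kappa f 3 1 p - kappa f 3 2 p)"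
    using coeffs assms(5) unfolding assoc_coeffs_def by auto
  consider "i = 1" | "i = 2" | "i = 3" using exhaust_3 by blast
  then show ?thesis
  proof cases
    case 1
    have "partial 1 (h 1) p
        = - 1 * (lame f 2 p * lame f 3 p / (lame f 1 p)\<^sup>2) * (kappa f 1 2 p - kappa f 1 3 p)"
      using ac by (intro partial_assoc_coeff_eq[where c=1 and h=h, OF assms(1,2,3,5) _ _ _ h3]) auto
    with nz show ?thesis
      by (intro that[of "- (lame f 2 p * lame f 3 p / (lame f 1 p)\<^sup>2)"])
        (simp_all add: 1 cyclic_successors_3)
  next
    case 2
    have "partial 2 (h 2) p
        = - (- 1) * (lame f 1 p * lame f 3 p / (lame f 2 p)\<^sup>2) * (kappa f 2 1 p - kappa f 2 3 p)"
      using ac by (intro partial_assoc_coeff_eq[where c="- 1" and h=h, OF assms(1,2,3,5) _ _ _ h3]) auto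
    with nz show ?thesis
      by (intro that[of "- (lame f 1 p * lame f 3 p / (lame f 2 p)\<^sup>2)"])
        (simp_all only: 2 cyclic_successors_3, simp_all add: diff_divide_distrib algebra_simps)
  next
    case 3
    with nz show ?thesis
      by (intro that[of "- (lame f 1 p * lame f 2 p / (lame f 3 p)\<^sup>2)"])
        (simp_all only: 3 cyclic_successors_3 ac, simp_all)
  qed
qed

theorem corollary4p6:
  fixes U :: "(real^3) set" and f fhat :: "real^3 \<Rightarrow> real^3" and h :: "3 \<Rightarrow> real^3 \<Rightarrow> real"
    and i :: 3
  assumes "open U" and "connected U"
    and "smooth3_on U f"
    and "guichard_net U f"
    and "associated_system U f fhat h"
  shows "totally_umbilic_coord U f i \<longleftrightarrow> (\<forall>p\<in>U. partial i (h i) p = 0)"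
proof -
  have "kappa f i (i+1) p = kappa f i (i+2) p \<longleftrightarrow> partial i (h i) p = 0" if "p \<in> U" for p
  proof -
    obtain s where "s \<noteq> 0" "partial i (h i) p = s * (kappa f i (i+1) p - kappa f i (i+2) p)"
      using partial_assoc_coeff_self_multiple[OF assms(1,3,4,5) \<open>p \<in> U\<close>] .
    then show ?thesis by simp
  qed
  then show ?thesis unfolding totally_umbilic_coord_def by blast
qed

end
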